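(* Let $V$ be a finite-dimensional real vector space with a linear action of $\mathbb H$, $\Lambda\subset V$ a lattice of maximal rank, and $W\subset V$ a real subspace. For $L\in\mathbb H$ with $L^2=-1$ let $W_{\mathbb Q,L}$ be the minimal rational $L$-invariant subspace of $V$ containing $W$, and $W_{\mathbb Q,\mathbb H}$ the minimal rational $\mathbb H$-invariant subspace of $V$ containing $W$. Then $W_{\mathbb Q,L}=W_{\mathbb Q,\mathbb H}$ for all such $L$ except for at most countably many.
   Context: A real subspace $U\subset V$ is rational if $\Lambda\cap U$ is a lattice of maximal rank in $U$. *)

theory Defs
  imports "HOL-Analysis.Analysis"
begin

text \<open>The real quaternion algebra H, as 4-tuples (a + b i + c j + d k).\<close>

datatype quat = Quat (qre: real) (qi: real) (qj: real) (qk: real)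

definition qone :: quat where "qone = Quat 1 0 0 0"

definition qadd :: "quat \<Rightarrow> quat \<Rightarrow> quat" where
  "qadd p q = Quat (qre p + qre q) (qi p + qi q) (qj p + qj q) (qk p + qk q)"

definition qscale :: "real \<Rightarrow> quat \<Rightarrow> quat" where
  "qscale r q = Quat (r * qre q) (r * qi q) (r * qj q) (r * qk q)"

definition qmult :: "quat \<Rightarrow> quat \<Rightarrow> quat" where
  "qmult p q = Quat
     (qre p * qre q - qi p * qi q - qj p * qj q - qk p * qk q)
     (qre p * qi q + qi p * qre q + qj p * qk q - qk p * qj q)
     (qre p * qj q - qi p * qk q + qj p * qre q + qk p * qi q)
     (qre p * qk q + qi p * qj q - qj p * qi q + qk p * qre q)"

definition quat_action :: "(quat \<Rightarrow> 'v::real_vector \<Rightarrow> 'v) \<Rightarrow> bool" where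
  "quat_action \<rho> \<longleftrightarrow>
     (\<forall>q. linear (\<rho> q)) \<and>
     \<rho> qone = id \<and>
     (\<forall>p q. \<rho> (qadd p q) = (\<lambda>v. \<rho> p v + \<rho> q v)) \<and>
     (\<forall>r q. \<rho> (qscale r q) = (\<lambda>v. r *\<^sub>R \<rho> q v)) \<and>
     (\<forall>p q. \<rho> (qmult p q) = \<rho> p \<circ> \<rho> q)"

definition int_span :: "'v::real_vector set \<Rightarrow> 'v set" where
  "int_span B = {v. \<exists>c :: 'v \<Rightarrow> int. v = (\<Sum>b\<in>B. of_int (c b) *\<^sub>R b)}"

definition full_lattice_in :: "'v::euclidean_space set \<Rightarrow> 'v set \<Rightarrow> bool" where
  "full_lattice_in \<Lambda> U \<longleftrightarrow>
     (\<exists>B. finite B \<and> B \<subseteq> U \<and> independent B \<and> span B = U \<and> \<Lambda> = int_span B)"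

definition rational_subspace :: "'v::euclidean_space set \<Rightarrow> 'v set \<Rightarrow> bool" where
  "rational_subspace \<Lambda> U \<longleftrightarrow> subspace U \<and> full_lattice_in (\<Lambda> \<inter> U) U"

definition W_QL :: "(quat \<Rightarrow> 'v \<Rightarrow> 'v) \<Rightarrow> 'v::euclidean_space set \<Rightarrow> quat \<Rightarrow> 'v set \<Rightarrow> 'v set" where
  "W_QL \<rho> \<Lambda> L W =
     \<Inter>{U. rational_subspace \<Lambda> U \<and> \<rho> L ` U \<subseteq> U \<and> W \<subseteq> U}"

definition W_QH :: "(quat \<Rightarrow> 'v \<Rightarrow> 'v) \<Rightarrow> 'v::euclidean_space set \<Rightarrow> 'v set \<Rightarrow> 'v set" where
  "W_QH \<rho> \<Lambda> W =
     \<Inter>{U. rational_subspace \<Lambda> U \<and> (\<forall>q. \<rho> q ` U \<subseteq> U) \<and> W \<subseteq> U}"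

end

theory Submission
  imports Defs
begin

text \<open>There are only countably many rational subspaces, since each is spanned by finitely
  many vectors of the countable lattice \<open>\<Lambda>\<close>. If a subspace is invariant under two square
  roots \<open>p\<close>, \<open>q\<close> of \<open>-1\<close> with \<open>q \<noteq> \<plusminus>p\<close>, it is invariant under all of \<open>\<bbbH>\<close>, because
  \<open>1, p, q, pq\<close> span \<open>\<bbbH>\<close>. Hence a rational subspace that is not \<open>\<bbbH>\<close>-invariant is invariant
  under at most two square roots of \<open>-1\<close>. If \<open>W\<^sub>\<bbbQ>\<^sub>,\<^sub>L \<noteq> W\<^sub>\<bbbQ>\<^sub>,\<^sub>\<bbbH>\<close>, some rational
  \<open>L\<close>-invariant subspace containing \<open>W\<close> is not \<open>\<bbbH>\<close>-invariant, so the exceptional \<open>L\<close> lie in a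
  countable union of sets with at most two elements.\<close>

lemma qmult_self_eq_minus_one_iff:
  "qmult L L = qscale (-1) qone \<longleftrightarrow> qre L = 0 \<and> (qi L)\<^sup>2 + (qj L)\<^sup>2 + (qk L)\<^sup>2 = 1"
proof (cases L)
  case (Quat l0 l1 l2 l3)
  have "qmult L L = qscale (-1) qone \<longleftrightarrow>
      l0 * l0 - l1 * l1 - l2 * l2 - l3 * l3 = -1 \<and> l0 * l1 = 0 \<and> l0 * l2 = 0 \<and> l0 * l3 = 0"
    by (auto simp: Quat qmult_def qscale_def qone_def algebra_simps)
  also have "\<dots> \<longleftrightarrow> l0 = 0 \<and> l1\<^sup>2 + l2\<^sup>2 + l3\<^sup>2 = 1"
    by (smt (verit, best) mult_eq_0_iff power2_eq_square zero_le_square)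
  finally show ?thesis by (simp add: Quat)
qed

lemma imaginary_units_eq_or_neg_if_qmult_real:
  assumes "qmult p p = qscale (-1) qone" "qmult q q = qscale (-1) qone"
    and "qi (qmult p q) = 0" "qj (qmult p q) = 0" "qk (qmult p q) = 0"
  shows "q = p \<or> q = qscale (-1) p"
proof -
  obtain p1 p2 p3 where p: "p = Quat 0 p1 p2 p3" and np: "p1\<^sup>2 + p2\<^sup>2 + p3\<^sup>2 = 1"
    using assms(1) by (cases p) (auto simp: qmult_self_eq_minus_one_iff)
  obtain q1 q2 q3 where q: "q = Quat 0 q1 q2 q3" and nq: "q1\<^sup>2 + q2\<^sup>2 + q3\<^sup>2 = 1"
    using assms(2) by (cases q) (auto simp: qmult_self_eq_minus_one_iff)
  define t where "t = p1 * q1 + p2 * q2 + p3 * q3"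
  have cross: "p2 * q3 - p3 * q2 = 0" "p3 * q1 - p1 * q3 = 0" "p1 * q2 - p2 * q1 = 0"
    using assms(3-5) by (simp_all add: p q qmult_def algebra_simps)
  have "t\<^sup>2 = (p1\<^sup>2 + p2\<^sup>2 + p3\<^sup>2) * (q1\<^sup>2 + q2\<^sup>2 + q3\<^sup>2)
      - ((p2 * q3 - p3 * q2)\<^sup>2 + (p3 * q1 - p1 * q3)\<^sup>2 + (p1 * q2 - p2 * q1)\<^sup>2)"
    by (simp add: t_def power2_eq_square algebra_simps)
  then have "t = 1 \<or> t = -1"
    using np nq cross by (simp add: power2_eq_1_iff)
  then show ?thesis
  proof
    assume "t = 1"
    then have "(q1 - p1)\<^sup>2 + (q2 - p2)\<^sup>2 + (q3 - p3)\<^sup>2 = 0"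
      using np nq by (simp add: t_def power2_eq_square algebra_simps)
    then show ?thesis by (simp add: p q add_nonneg_eq_0_iff)
  next
    assume "t = -1"
    then have "(q1 + p1)\<^sup>2 + (q2 + p2)\<^sup>2 + (q3 + p3)\<^sup>2 = 0"
      using np nq by (simp add: t_def power2_eq_square algebra_simps)
    then have "q1 + p1 = 0 \<and> q2 + p2 = 0 \<and> q3 + p3 = 0"
      by (simp only: add_nonneg_eq_0_iff zero_le_power2 add_nonneg_nonneg power_eq_0_iff)
    then show ?thesis by (simp add: p q qscale_def add_eq_0_iff)
  qed
qed

lemma quat_in_span_1_p_q_pq:
  assumes "qre p = 0" "qre q = 0"
    and "\<not> (qi (qmult p q) = 0 \<and> qj (qmult p q) = 0 \<and> qk (qmult p q) = 0)"
  shows "\<exists>a b c d. x = qadd (qadd (qscale a qone) (qscale b p)) (qadd (qscale c q) (qscale d (qmult p q)))"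
proof -
  obtain x0 x1 x2 x3 where x: "x = Quat x0 x1 x2 x3" by (cases x)
  obtain p1 p2 p3 where p: "p = Quat 0 p1 p2 p3" using assms(1) by (cases p) auto
  obtain q1 q2 q3 where q: "q = Quat 0 q1 q2 q3" using assms(2) by (cases q) auto
  define n1 n2 n3 where "n1 = p2 * q3 - p3 * q2" and "n2 = p3 * q1 - p1 * q3" and "n3 = p1 * q2 - p2 * q1"
  define A B t where "A = p1\<^sup>2 + p2\<^sup>2 + p3\<^sup>2" and "B = q1\<^sup>2 + q2\<^sup>2 + q3\<^sup>2"
    and "t = p1 * q1 + p2 * q2 + p3 * q3"
  define xp xq xn where "xp = x1 * p1 + x2 * p2 + x3 * p3" and "xq = x1 * q1 + x2 * q2 + x3 * q3"
    and "xn = x1 * n1 + x2 * n2 + x3 * n3"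
  define D where "D = A * B - t\<^sup>2"
  \<comment> \<open>Since \<open>pq = -t + n\<close> with \<open>n = p \<times> q\<close>, the coefficients below split the imaginary part of
    \<open>x\<close> into its projection onto \<open>span {p, q}\<close> (Gram matrix with determinant \<open>D\<close>) and its
    component along \<open>n\<close>, using \<open>D = |n|\<^sup>2\<close>.\<close>
  have "D = n1\<^sup>2 + n2\<^sup>2 + n3\<^sup>2"
    by (simp add: D_def A_def B_def t_def n1_def n2_def n3_def power2_eq_square algebra_simps)
  moreover have "\<not> (n1 = 0 \<and> n2 = 0 \<and> n3 = 0)"
    using assms(3) by (simp add: p q qmult_def n1_def n2_def n3_def algebra_simps)
  ultimately have "D \<noteq> 0"
    by (simp add: add_nonneg_eq_0_iff)
  have "x = qscale (1 / D) (qadd (qadd (qscale (D * x0 + xn * t) qone) (qscale (B * xp - t * xq) p))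
      (qadd (qscale (A * xq - t * xp) q) (qscale xn (qmult p q))))"
    using \<open>D \<noteq> 0\<close> unfolding x p q qscale_def qadd_def qmult_def qone_def
    by (simp add: D_def A_def B_def t_def xp_def xq_def xn_def n1_def n2_def n3_def field_simps) algebra
  moreover have "qscale r (qadd u v) = qadd (qscale r u) (qscale r v)"
    and "qscale r (qscale s u) = qscale (r * s) u" for r s u v
    by (simp_all add: qscale_def qadd_def algebra_simps)
  ultimately show ?thesis by metis
qed

lemma invariant_if_invariant_under_two_imaginary_units:
  assumes "quat_action \<rho>" and "subspace U"
    and "qmult p p = qscale (-1) qone" "qmult q q = qscale (-1) qone"
    and "q \<noteq> p" "q \<noteq> qscale (-1) p"
    and "\<rho> p ` U \<subseteq> U" "\<rho> q ` U \<subseteq> U"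
  shows "\<rho> x ` U \<subseteq> U"
proof -
  have "qre p = 0" "qre q = 0"
    using assms(3,4) by (simp_all add: qmult_self_eq_minus_one_iff)
  moreover have "\<not> (qi (qmult p q) = 0 \<and> qj (qmult p q) = 0 \<and> qk (qmult p q) = 0)"
    using imaginary_units_eq_or_neg_if_qmult_real[OF assms(3,4)] assms(5,6) by blast
  ultimately obtain a b c d
    where "x = qadd (qadd (qscale a qone) (qscale b p)) (qadd (qscale c q) (qscale d (qmult p q)))"
    using quat_in_span_1_p_q_pq by blast
  then have "\<rho> x = (\<lambda>v. a *\<^sub>R v + b *\<^sub>R \<rho> p v + (c *\<^sub>R \<rho> q v + d *\<^sub>R \<rho> p (\<rho> q v)))"
    using assms(1) by (simp add: quat_action_def)
  then show ?thesis
    using assms(2,7,8) by (auto intro!: subspace_add subspace_scale)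
qed

lemma finite_imaginary_units_stabilizing:
  assumes "quat_action \<rho>" and "subspace U" and "\<not> (\<forall>q. \<rho> q ` U \<subseteq> U)"
  shows "finite {L. qmult L L = qscale (-1) qone \<and> \<rho> L ` U \<subseteq> U}" (is "finite ?S")
proof (cases "?S = {}")
  case False
  then obtain p where p: "p \<in> ?S" by blast
  have "?S \<subseteq> {p, qscale (-1) p}"
    using invariant_if_invariant_under_two_imaginary_units[OF assms(1,2)] p assms(3) by blast
  then show ?thesis by (rule finite_subset) simp
qed (metis finite.emptyI)

lemma int_span_superset: "finite B \<Longrightarrow> B \<subseteq> int_span B"
proof
  fix b assume "finite B" "b \<in> B"
  have "(\<Sum>b'\<in>B. of_int (if b' = b then 1 else 0) *\<^sub>R b') = (\<Sum>b'\<in>B. if b' = b then b' else 0)"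
    by (rule sum.cong) auto
  also have "\<dots> = b"
    using \<open>finite B\<close> \<open>b \<in> B\<close> by simp
  finally show "b \<in> int_span B"
    unfolding int_span_def by (intro CollectI exI[of _ "\<lambda>b'. if b' = b then 1 else 0"]) simp
qed

lemma countable_int_span:
  assumes "finite B"
  shows "countable (int_span B)"
proof -
  let ?comb = "\<lambda>c. \<Sum>b\<in>B. of_int (c b) *\<^sub>R b"
  have "int_span B \<subseteq> ?comb ` (B \<rightarrow>\<^sub>E (UNIV :: int set))"
  proof
    fix v assume "v \<in> int_span B"
    then obtain c :: "_ \<Rightarrow> int" where c: "v = ?comb c"
      unfolding int_span_def by auto
    then have "v = ?comb (restrict c B)"
      by (auto intro: sum.cong)
    moreover have "restrict c B \<in> B \<rightarrow>\<^sub>E UNIV" by auto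
    ultimately show "v \<in> ?comb ` (B \<rightarrow>\<^sub>E UNIV)" by blast
  qed
  moreover have "countable (B \<rightarrow>\<^sub>E (UNIV :: int set))"
    using assms by (intro countable_PiE) auto
  ultimately show ?thesis
    by (meson countable_image countable_subset)
qed

lemma rational_subspace_spanned_by_lattice_vectors:
  assumes "rational_subspace \<Lambda> U"
  obtains B where "finite B" "B \<subseteq> \<Lambda>" "U = span B"
proof -
  from assms obtain B where "finite B" "span B = U" "\<Lambda> \<inter> U = int_span B"
    unfolding rational_subspace_def full_lattice_in_def by auto
  with int_span_superset[of B] show ?thesis by (intro that) auto
qed

lemma countable_rational_subspaces:
  assumes "full_lattice_in \<Lambda> UNIV"
  shows "countable {U. rational_subspace \<Lambda> U}"
proof -
  have "countable \<Lambda>"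
    using assms countable_int_span unfolding full_lattice_in_def by blast
  then have "countable (span ` {B. finite B \<and> B \<subseteq> \<Lambda>})"
    using countable_Collect_finite_subset by blast
  moreover have "{U. rational_subspace \<Lambda> U} \<subseteq> span ` {B. finite B \<and> B \<subseteq> \<Lambda>}"
  proof
    fix U assume "U \<in> {U. rational_subspace \<Lambda> U}"
    then obtain B where "finite B" "B \<subseteq> \<Lambda>" "U = span B"
      by (auto elim: rational_subspace_spanned_by_lattice_vectors)
    then show "U \<in> span ` {B. finite B \<and> B \<subseteq> \<Lambda>}" by blast
  qed
  ultimately show ?thesis by (rule countable_subset[rotated])
qed

lemma W_QL_ne_W_QH_obtains_noninvariant:
  assumes "W_QL \<rho> \<Lambda> L W \<noteq> W_QH \<rho> \<Lambda> W"
  obtains U where "rational_subspace \<Lambda> U" "\<rho> L ` U \<subseteq> U" "W \<subseteq> U" "\<not> (\<forall>q. \<rho> q ` U \<subseteq> U)"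
proof -
  have "W_QL \<rho> \<Lambda> L W \<subseteq> W_QH \<rho> \<Lambda> W"
    unfolding W_QL_def W_QH_def by blast
  with assms obtain x where x: "x \<in> W_QH \<rho> \<Lambda> W" "x \<notin> W_QL \<rho> \<Lambda> L W" by blast
  from x(2) obtain U where U: "rational_subspace \<Lambda> U" "\<rho> L ` U \<subseteq> U" "W \<subseteq> U" "x \<notin> U"
    unfolding W_QL_def by blast
  moreover have "\<not> (\<forall>q. \<rho> q ` U \<subseteq> U)"
    using x(1) U unfolding W_QH_def by blast
  ultimately show ?thesis by (intro that)
qed

theorem lemma3p4:
  fixes \<rho> :: "quat \<Rightarrow> 'v::euclidean_space \<Rightarrow> 'v"
    and \<Lambda> W :: "'v set"
  assumes "quat_action \<rho>"
    and "full_lattice_in \<Lambda> (UNIV :: 'v set)"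
    and "subspace W"
  shows "countable {L. qmult L L = qscale (-1) qone \<and> W_QL \<rho> \<Lambda> L W \<noteq> W_QH \<rho> \<Lambda> W}"
proof -
  let ?bad = "{U. rational_subspace \<Lambda> U \<and> \<not> (\<forall>q. \<rho> q ` U \<subseteq> U)}"
  let ?stab = "\<lambda>U. {L. qmult L L = qscale (-1) qone \<and> \<rho> L ` U \<subseteq> U}"
  have "{L. qmult L L = qscale (-1) qone \<and> W_QL \<rho> \<Lambda> L W \<noteq> W_QH \<rho> \<Lambda> W} \<subseteq> (\<Union>U\<in>?bad. ?stab U)"
  proof (intro subsetI, elim CollectE conjE)
    fix L assume L: "qmult L L = qscale (-1) qone" and ne: "W_QL \<rho> \<Lambda> L W \<noteq> W_QH \<rho> \<Lambda> W"
    obtain U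
      where "rational_subspace \<Lambda> U" "\<rho> L ` U \<subseteq> U" "W \<subseteq> U" "\<not> (\<forall>q. \<rho> q ` U \<subseteq> U)"
      using ne by (rule W_QL_ne_W_QH_obtains_noninvariant)
    with L show "L \<in> (\<Union>U\<in>?bad. ?stab U)" by blast
  qed
  moreover have "countable (\<Union>U\<in>?bad. ?stab U)"
  proof (rule countable_UN)
    show "countable ?bad"
      using countable_rational_subspaces[OF assms(2)] by (rule countable_subset[rotated]) blast
  next
    fix U assume "U \<in> ?bad"
    then have "subspace U" "\<not> (\<forall>q. \<rho> q ` U \<subseteq> U)"
      by (simp_all add: rational_subspace_def)
    then show "countable (?stab U)"
      by (intro countable_finite finite_imaginary_units_stabilizing[OF assms(1)])
  qed
  ultimately show ?thesis by (rule countable_subset)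
qed

end
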